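(* Let the channel gains form an $m$-dependent frequency-selective channel with $K=N$, with each $|h_{n,n,k}|$ having a continuous distribution. Let $B_M$ be the user–resource bipartite graph connecting each user to his $M$ best REs (respectively, his $M$ worst REs), and let $G_m$ be the union of core graphs built with $X_{n,k}=|h_{n,n,k}|$ (respectively, $X_{n,k}=-|h_{n,n,k}|$). If $M=M_N\ge(m+1)(e+\varepsilon)\ln N$ for some $\varepsilon>0$ and $M/N\to0$, then $\Pr(G_m\subseteq B_M)\to1$ as $N\to\infty$ (i.e. with probability tending to one every edge of $G_m$ is an edge of $B_M$).
   Context: $N$ users, $K=N$ REs, complex channel gains $h_{n_1,n_2,k}$. Given an integer $m\ge0$ not depending on $N$, they form an $m$-dependent frequency-selective channel if: (i) for each pair $(n_1,n_2)$, $h_{n_1,n_2,1},\dots,h_{n_1,n_2,K}$ are identically distributed and $\Pr(|h_{n_1,n_2,k}|=0)=0$; (ii) the vectors $(h_{n_1,n_2,k})_{k=1}^K$ for distinct pairs are mutually independent; (iii) for each pair, $(h_{n_1,n_2,k})_k$ is $m$-dependent: for every $s$, $(h_{n_1,n_2,k})_{k\le s}$ is independent of $(h_{n_1,n_2,k})_{k>s+m}$. $|h_{n,n,(j)}|$ is the $j$-th smallest of $|h_{n,n,1}|,\dots,|h_{n,n,K}|$. $B_M$ (best version): bipartite graph on users and REs with edge $(n,k)$ iff $|h_{n,n,k}|\ge|h_{n,n,(K-M+1)}|$; worst version: edge iff $|h_{n,n,k}|\le|h_{n,n,(M)}|$. For a random variable $Y$, $\bar q_Y(p)=\min\{x:F_Y(x)\ge1-p\}$.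 For $i=0,\dots,m$ let $\mathcal I_i=\{j\in\{1,\dots,N\}:\,j\equiv i+1\pmod{m+1}\}$; the core graph $G_{m,i}$ has left vertices the users in $\mathcal I_i$, right vertices the REs in $\mathcal I_i$, and edge $(n,k)$ iff $X_{n,k}>\bar q_{X_{n,k}}\big(\frac{M}{e(K+m+1)}\big)$; $G_m=\bigcup_iG_{m,i}$. *)

theory Defs
  imports "HOL-Probability.Probability"
begin

text \<open>Users and REs are indexed by 1..N. h n1 n2 k \<omega> is the complex gain h_{n1,n2,k}
  as a random variable on the sample space of the probability space P.\<close>

definition mdep_channel ::
  "'a measure \<Rightarrow> nat \<Rightarrow> nat \<Rightarrow> (nat \<Rightarrow> nat \<Rightarrow> nat \<Rightarrow> 'a \<Rightarrow> complex) \<Rightarrow> bool" where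
  "mdep_channel P N m h \<longleftrightarrow>
     (\<forall>n1\<in>{1..N}. \<forall>n2\<in>{1..N}. \<forall>k\<in>{1..N}. h n1 n2 k \<in> borel_measurable P) \<and>
     \<comment> \<open>(i) identically distributed along k, and |h| = 0 with probability 0\<close>
     (\<forall>n1\<in>{1..N}. \<forall>n2\<in>{1..N}. \<forall>k\<in>{1..N}.
        distr P borel (h n1 n2 k) = distr P borel (h n1 n2 1) \<and>
        measure P {\<omega>\<in>space P. cmod (h n1 n2 k \<omega>) = 0} = 0) \<and>
     \<comment> \<open>(ii) the vectors (h_{n1,n2,k})_k for distinct pairs are mutually independent\<close>
     prob_space.indep_vars P (\<lambda>_. PiM {1..N} (\<lambda>_. borel))
        (\<lambda>(n1, n2) \<omega>. \<lambda>k\<in>{1..N}. h n1 n2 k \<omega>) ({1..N} \<times> {1..N}) \<and>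
     \<comment> \<open>(iii) m-dependence along k\<close>
     (\<forall>n1\<in>{1..N}. \<forall>n2\<in>{1..N}. \<forall>s.
        prob_space.indep_var P
          (PiM {1..min s N} (\<lambda>_. borel)) (\<lambda>\<omega>. \<lambda>k\<in>{1..min s N}. h n1 n2 k \<omega>)
          (PiM {s+m+1..N} (\<lambda>_. borel)) (\<lambda>\<omega>. \<lambda>k\<in>{s+m+1..N}. h n1 n2 k \<omega>))"

text \<open>j-th smallest (1-based) of f 1, ..., f K.\<close>
definition ordstat :: "(nat \<Rightarrow> real) \<Rightarrow> nat \<Rightarrow> nat \<Rightarrow> real" where
  "ordstat f K j = sort (map f [1..<K+1]) ! (j - 1)"

definition qbar :: "'a measure \<Rightarrow> ('a \<Rightarrow> real) \<Rightarrow> real \<Rightarrow> real" where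
  "qbar P Y p = Inf {x. cdf (distr P borel Y) x \<ge> 1 - p}"

definition B_best :: "(nat \<Rightarrow> nat \<Rightarrow> nat \<Rightarrow> 'a \<Rightarrow> complex) \<Rightarrow> nat \<Rightarrow> nat \<Rightarrow> 'a \<Rightarrow> (nat \<times> nat) set" where
  "B_best h N M \<omega> = {(n, k). n \<in> {1..N} \<and> k \<in> {1..N} \<and>
      cmod (h n n k \<omega>) \<ge> ordstat (\<lambda>j. cmod (h n n j \<omega>)) N (N - M + 1)}"

definition B_worst :: "(nat \<Rightarrow> nat \<Rightarrow> nat \<Rightarrow> 'a \<Rightarrow> complex) \<Rightarrow> nat \<Rightarrow> nat \<Rightarrow> 'a \<Rightarrow> (nat \<times> nat) set" where
  "B_worst h N M \<omega> = {(n, k). n \<in> {1..N} \<and> k \<in> {1..N} \<and>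
      cmod (h n n k \<omega>) \<le> ordstat (\<lambda>j. cmod (h n n j \<omega>)) N M}"

definition core_idx :: "nat \<Rightarrow> nat \<Rightarrow> nat \<Rightarrow> nat set" where
  "core_idx m N i = {j \<in> {1..N}. j mod (m + 1) = (i + 1) mod (m + 1)}"

definition core_graph ::
  "'a measure \<Rightarrow> (nat \<Rightarrow> nat \<Rightarrow> 'a \<Rightarrow> real) \<Rightarrow> nat \<Rightarrow> nat \<Rightarrow> nat \<Rightarrow> nat \<Rightarrow> 'a \<Rightarrow> (nat \<times> nat) set" where
  "core_graph P X m N M i \<omega> = {(n, k). n \<in> core_idx m N i \<and> k \<in> core_idx m N i \<and>
      X n k \<omega> > qbar P (X n k) (real M / (exp 1 * real (N + m + 1)))}"

definition G_union ::
  "'a measure \<Rightarrow> (nat \<Rightarrow> nat \<Rightarrow> 'a \<Rightarrow> real) \<Rightarrow> nat \<Rightarrow> nat \<Rightarrow> nat \<Rightarrow> 'a \<Rightarrow> (nat \<times> nat) set" where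
  "G_union P X m N M \<omega> = (\<Union>i\<in>{0..m}. core_graph P X m N M i \<omega>)"

end

(* Fix a user n and let q_n be the threshold defining the core graphs, which each RE exceeds with
   probability at most p = M / (e (N + m + 1)).  If an edge (n, k) of G_m is missing from B_M, then
   at least M REs beat k and hence exceed q_n; distributing them over the residue classes modulo
   m + 1, some class contains at least M / (m + 1) exceedances.  REs of one class are more than m
   apart, so by m-dependence the exponential moment of the number of exceedances in a class is at
   most (1 + (e - 1) p)^(class size), and Markov's inequality bounds the probability of that event
   by exp (- M / (e (m + 1))) <= N^(-1 - eps/e).  A union bound over the N users and m + 1 classes
   leaves (m + 1) N^(-eps/e), which tends to 0.  The worst-RE version is the same argument applied
   to -|h|. *)

theory Submission
  imports Defs
begin

lemma sorted_nth_downclosed_iff: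
  fixes xs :: "'b::linorder list"
  assumes "sorted xs" "r < length xs" and down: "\<And>y z. P y \<Longrightarrow> z \<le> y \<Longrightarrow> P z"
  shows "P (xs ! r) \<longleftrightarrow> r < length (filter P xs)"
  using assms(1,2)
proof (induction xs arbitrary: r)
  case Nil then show ?case by simp
next
  case (Cons a ys)
  have a_min: "\<forall>y\<in>set ys. a \<le> y" using Cons.prems(1) by simp
  show ?case
  proof (cases "P a")
    case True
    then show ?thesis using Cons by (cases r) auto
  next
    case False
    then have "filter P ys = []" "\<not> P ((a # ys) ! r)"
      using a_min down Cons.prems(2) by (auto simp: filter_empty_conv nth_Cons split: nat.split)
    then show ?thesis using False by simp
  qed
qed

lemma ordstat_downclosed_iff:
  assumes "1 \<le> r" "r \<le> K" and down: "\<And>y z. P y \<Longrightarrow> z \<le> y \<Longrightarrow> P z"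
  shows "P (ordstat f K r) \<longleftrightarrow> r \<le> card {j \<in> {1..K}. P (f j)}"
proof -
  let ?L = "map f [1..<K+1]"
  have "P (ordstat f K r) \<longleftrightarrow> r - 1 < length (filter P (sort ?L))"
    unfolding ordstat_def using assms by (intro sorted_nth_downclosed_iff) auto
  also have "length (filter P (sort ?L)) = length (filter (P \<circ> f) [1..<K+1])"
    by (metis filter_map length_map mset_filter mset_sort size_mset)
  also have "\<dots> = card {j \<in> {1..K}. P (f j)}"
    by (subst distinct_card[symmetric]) (auto intro: arg_cong[where f=card])
  finally show ?thesis using assms by linarith
qed

definition top_edges ::
  "('b \<Rightarrow> real) \<Rightarrow> (nat \<Rightarrow> nat \<Rightarrow> nat \<Rightarrow> 'a \<Rightarrow> 'b) \<Rightarrow> nat \<Rightarrow> nat \<Rightarrow> 'a \<Rightarrow>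
    (nat \<times> nat) set" where
  "top_edges \<phi> h N M \<omega> = {(n, k). n \<in> {1..N} \<and> k \<in> {1..N} \<and>
      card {j \<in> {1..N}. \<phi> (h n n k \<omega>) < \<phi> (h n n j \<omega>)} < M}"

lemma B_best_eq_top_edges:
  assumes "1 \<le> M" "M \<le> N"
  shows "B_best h N M \<omega> = top_edges cmod h N M \<omega>"
proof -
  have "ordstat (\<lambda>j. cmod (h n n j \<omega>)) N (N - M + 1) \<le> cmod (h n n k \<omega>) \<longleftrightarrow>
        card {j \<in> {1..N}. cmod (h n n k \<omega>) < cmod (h n n j \<omega>)} < M" for n k
  proof -
    let ?le = "{j \<in> {1..N}. cmod (h n n j \<omega>) \<le> cmod (h n n k \<omega>)}"
      and ?gt = "{j \<in> {1..N}. cmod (h n n k \<omega>) < cmod (h n n j \<omega>)}"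
    have "card ?le + card ?gt = card (?le \<union> ?gt)"
      by (rule card_Un_disjoint[symmetric]) auto
    also have "?le \<union> ?gt = {1..N}" by auto
    finally have "card ?le + card ?gt = N" by simp
    moreover have "ordstat (\<lambda>j. cmod (h n n j \<omega>)) N (N - M + 1) \<le> cmod (h n n k \<omega>) \<longleftrightarrow>
        N - M + 1 \<le> card ?le"
      using assms by (intro ordstat_downclosed_iff) auto
    ultimately show ?thesis using assms by linarith
  qed
  then show ?thesis unfolding B_best_def top_edges_def by auto
qed

lemma B_worst_eq_top_edges:
  assumes "1 \<le> M" "M \<le> N"
  shows "B_worst h N M \<omega> = top_edges (\<lambda>z. - cmod z) h N M \<omega>"
proof -
  have "cmod (h n n k \<omega>) \<le> ordstat (\<lambda>j. cmod (h n n j \<omega>)) N M \<longleftrightarrow>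
        card {j \<in> {1..N}. cmod (h n n j \<omega>) < cmod (h n n k \<omega>)} < M" for n k
    using ordstat_downclosed_iff[of M N "\<lambda>y. y < cmod (h n n k \<omega>)"] assms
    by (auto simp: not_less[symmetric])
  then show ?thesis unfolding B_worst_def top_edges_def by auto
qed

definition residue_class :: "nat \<Rightarrow> nat \<Rightarrow> nat \<Rightarrow> nat set" where
  "residue_class d N c = {k \<in> {1..N}. k mod d = c}"

lemma residue_class_subset: "residue_class d N c \<subseteq> {1..N}"
  by (auto simp: residue_class_def)

lemma residue_class_gap:
  assumes "a \<in> residue_class d N c" "b \<in> residue_class d N c" "a < b"
  shows "a + d \<le> b"
proof -
  have "b mod d = a mod d" using assms(1,2) by (simp add: residue_class_def)
  then have "d dvd b - a" using assms(3) by (simp add: mod_eq_dvd_iff_nat)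
  then show ?thesis using assms(3) by (auto dest: dvd_imp_le)
qed

lemma card_residue_class_le:
  assumes "0 < d"
  shows "card (residue_class d N c) * d \<le> N + d"
proof -
  have "inj_on (\<lambda>k. k div d) (residue_class d N c)"
  proof (rule inj_onI)
    fix x y assume "x \<in> residue_class d N c" "y \<in> residue_class d N c" "x div d = y div d"
    then have "x div d * d + x mod d = y div d * d + y mod d" by (simp add: residue_class_def)
    then show "x = y" by simp
  qed
  moreover have "(\<lambda>k. k div d) ` residue_class d N c \<subseteq> {0..N div d}"
    by (auto simp: residue_class_def div_le_mono)
  ultimately have "card (residue_class d N c) \<le> card {0..N div d}"
    by (intro card_inj_on_le) auto
  then have "card (residue_class d N c) * d \<le> (N div d + 1) * d" by (intro mult_le_mono1) simp
  also have "\<dots> \<le> N + d" using div_times_less_eq_dividend[of N d] by simp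
  finally show ?thesis .
qed

lemma exists_residue_class_card_ge:
  assumes "0 < d" and t: "t \<le> real (card {k \<in> {1..N}. P k})"
  shows "\<exists>c<d. t / d \<le> real (card {k \<in> residue_class d N c. P k})"
proof (rule ccontr)
  assume "\<not> ?thesis"
  then have sparse: "real (card {k \<in> residue_class d N c. P k}) < t / d" if "c < d" for c
    using that by auto
  have "real (card {k \<in> {1..N}. P k}) = (\<Sum>k\<in>{1..N}. of_bool (P k))"
    by (simp add: Int_def conj_commute)
  also have "\<dots> = (\<Sum>c<d. \<Sum>k\<in>residue_class d N c. of_bool (P k))"
    unfolding residue_class_def using assms(1) by (subst sum.group[symmetric]) auto
  also have "\<dots> = (\<Sum>c<d. real (card {k \<in> residue_class d N c. P k}))"
    by (simp add: residue_class_def Int_def conj_commute)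
  also have "\<dots> < (\<Sum>c<d. t / d)"
    using assms(1) sparse by (intro sum_strict_mono) auto
  also have "\<dots> = t" using assms(1) by simp
  finally show False using t by simp
qed

lemma mem_G_union_iff:
  "(n, k) \<in> G_union P X m N M \<omega> \<longleftrightarrow>
     (\<exists>i\<le>m. n \<in> core_idx m N i \<and> k \<in> core_idx m N i) \<and>
     qbar P (X n k) (real M / (exp 1 * real (N + m + 1))) < X n k \<omega>"
  by (auto simp: G_union_def core_graph_def)

lemma card_greater_lt_if_residue_classes_sparse:
  fixes f :: "nat \<Rightarrow> real"
  assumes "0 < d" "q < f k"
    and sparse: "\<And>c. c < d \<Longrightarrow> real (card {j \<in> residue_class d N c. q < f j}) < t / d"
  shows "real (card {j \<in> {1..N}. f k < f j}) < t"
proof (rule ccontr)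
  assume "\<not> ?thesis"
  then have "t \<le> real (card {j \<in> {1..N}. f k < f j})" by simp
  also have "\<dots> \<le> real (card {j \<in> {1..N}. q < f j})"
    using \<open>q < f k\<close> by (intro of_nat_mono card_mono) auto
  finally obtain c where "c < d" "t / d \<le> real (card {j \<in> residue_class d N c. q < f j})"
    using exists_residue_class_card_ge[OF \<open>0 < d\<close>, of t N "\<lambda>j. q < f j"] by blast
  then show False using sparse by fastforce
qed

lemma G_union_subset_top_edges_if_sparse:
  fixes Z :: "nat \<Rightarrow> nat \<Rightarrow> nat \<Rightarrow> 'a \<Rightarrow> 'b" and q :: "nat \<Rightarrow> real"
  assumes q: "\<And>n k. n \<in> {1..N} \<Longrightarrow> k \<in> {1..N} \<Longrightarrow>
      qbar P (\<lambda>\<omega>. \<phi> (Z n n k \<omega>)) (real Mn / (exp 1 * real (N + m + 1))) = q n"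
    and sparse: "\<And>n c. n \<in> {1..N} \<Longrightarrow> c < m + 1 \<Longrightarrow>
      real (card {j \<in> residue_class (m + 1) N c. q n < \<phi> (Z n n j \<omega>)}) < real Mn / real (m + 1)"
  shows "G_union P (\<lambda>n k \<omega>. \<phi> (Z n n k \<omega>)) m N Mn \<omega> \<subseteq> top_edges \<phi> Z N Mn \<omega>"
proof safe
  fix n k assume "(n, k) \<in> G_union P (\<lambda>n k \<omega>. \<phi> (Z n n k \<omega>)) m N Mn \<omega>"
  then have "\<exists>i\<le>m. n \<in> core_idx m N i \<and> k \<in> core_idx m N i"
    and exceeds: "qbar P (\<lambda>\<omega>. \<phi> (Z n n k \<omega>)) (real Mn / (exp 1 * real (N + m + 1))) < \<phi> (Z n n k \<omega>)"
    unfolding mem_G_union_iff by auto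
  then have nk: "n \<in> {1..N}" "k \<in> {1..N}" by (auto simp: core_idx_def)
  then have "real (card {j \<in> {1..N}. \<phi> (Z n n k \<omega>) < \<phi> (Z n n j \<omega>)}) < real Mn"
    using exceeds q sparse by (intro card_greater_lt_if_residue_classes_sparse[where q="q n" and d="m + 1"]) auto
  then show "(n, k) \<in> top_edges \<phi> Z N Mn \<omega>" using nk unfolding top_edges_def by simp
qed

lemma card_filter_singleton: "card {k \<in> {b}. P k} = of_bool (P b)"
proof -
  have "{k \<in> {b}. P k} = (if P b then {b} else {})" by auto
  then show ?thesis by simp
qed

lemma borel_measurable_card_Collect:
  assumes "finite A" and Q: "\<And>j. j \<in> A \<Longrightarrow> Measurable.pred M (Q j)"
  shows "(\<lambda>\<omega>. real (card {j \<in> A. Q j \<omega>})) \<in> borel_measurable M"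
proof -
  have "(\<lambda>\<omega>. \<Sum>j\<in>A. of_bool (Q j \<omega>) :: real) \<in> borel_measurable M"
    using Q by (intro borel_measurable_sum) (simp add: measurable_If_set pred_def)
  moreover have "(\<Sum>j\<in>A. of_bool (Q j \<omega>)) = real (card {j \<in> A. Q j \<omega>})" for \<omega>
    using \<open>finite A\<close> by (simp add: Int_def conj_commute)
  ultimately show ?thesis by simp
qed

lemma borel_measurable_exp_card_component:
  assumes "finite C" "C \<subseteq> I" "S \<in> sets B"
  shows "(\<lambda>v. exp (real (card {k \<in> C. v k \<in> S}))) \<in> borel_measurable (PiM I (\<lambda>_. B))"
proof -
  have "(\<lambda>v. real (card {k \<in> C. v k \<in> S})) \<in> borel_measurable (PiM I (\<lambda>_. B))"
    using assms by (intro borel_measurable_card_Collect) (auto intro!: measurable_component_singleton)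
  from measurable_compose[OF this borel_measurable_exp] show ?thesis .
qed

lemma pred_G_union_subset_top_edges:
  fixes Z :: "nat \<Rightarrow> nat \<Rightarrow> nat \<Rightarrow> 'a \<Rightarrow> 'b::topological_space"
  assumes Z: "\<And>n k. n \<in> {1..N} \<Longrightarrow> k \<in> {1..N} \<Longrightarrow> Z n n k \<in> borel_measurable M"
    and \<phi>: "\<phi> \<in> borel_measurable borel"
  shows "Measurable.pred M (\<lambda>\<omega>. G_union M (\<lambda>n k \<omega>. \<phi> (Z n n k \<omega>)) m N Mn \<omega> \<subseteq> top_edges \<phi> Z N Mn \<omega>)"
proof -
  let ?G = "\<lambda>\<omega>. G_union M (\<lambda>n k \<omega>. \<phi> (Z n n k \<omega>)) m N Mn \<omega>"
  have G_sub: "?G \<omega> \<subseteq> {1..N} \<times> {1..N}" for \<omega>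
    by (auto simp: mem_G_union_iff core_idx_def)
  have "?G \<omega> \<subseteq> top_edges \<phi> Z N Mn \<omega> \<longleftrightarrow>
      (\<forall>n\<in>{1..N}. \<forall>k\<in>{1..N}. (n, k) \<in> ?G \<omega> \<longrightarrow>
         real (card {j \<in> {1..N}. \<phi> (Z n n k \<omega>) < \<phi> (Z n n j \<omega>)}) < real Mn)" for \<omega>
    using G_sub[of \<omega>] unfolding top_edges_def by fastforce
  moreover have "Measurable.pred M (\<lambda>\<omega>. \<forall>n\<in>{1..N}. \<forall>k\<in>{1..N}. (n, k) \<in> ?G \<omega> \<longrightarrow>
         real (card {j \<in> {1..N}. \<phi> (Z n n k \<omega>) < \<phi> (Z n n j \<omega>)}) < real Mn)"
  proof (intro pred_intros_finite finite_atLeastAtMost pred_intros_logic)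
    fix n k assume n: "n \<in> {1..N}" and k: "k \<in> {1..N}"
    have [measurable]: "(\<lambda>\<omega>. \<phi> (Z n n j \<omega>)) \<in> borel_measurable M" if "j \<in> {1..N}" for j
      using measurable_compose[OF Z[OF n that] \<phi>] .
    show "Measurable.pred M (\<lambda>\<omega>. (n, k) \<in> ?G \<omega>)"
      unfolding mem_G_union_iff using k by measurable
    have "(\<lambda>\<omega>. real (card {j \<in> {1..N}. \<phi> (Z n n k \<omega>) < \<phi> (Z n n j \<omega>)})) \<in> borel_measurable M"
      using k by (intro borel_measurable_card_Collect) auto
    then show "Measurable.pred M (\<lambda>\<omega>. real (card {j \<in> {1..N}. \<phi> (Z n n k \<omega>) < \<phi> (Z n n j \<omega>)}) < real Mn)"
      by measurable
  qed
  ultimately show ?thesis by simp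
qed

definition m_dependent ::
  "'a measure \<Rightarrow> 'b measure \<Rightarrow> nat \<Rightarrow> nat \<Rightarrow> (nat \<Rightarrow> 'a \<Rightarrow> 'b) \<Rightarrow> bool" where
  "m_dependent M B N m Z \<longleftrightarrow> (\<forall>s. prob_space.indep_var M
     (PiM {1..min s N} (\<lambda>_. B)) (\<lambda>\<omega>. \<lambda>k\<in>{1..min s N}. Z k \<omega>)
     (PiM {s+m+1..N} (\<lambda>_. B)) (\<lambda>\<omega>. \<lambda>k\<in>{s+m+1..N}. Z k \<omega>))"

lemma qbar_distr_cong:
  assumes "X \<in> measurable M B" "Y \<in> measurable M B" "distr M B X = distr M B Y"
    and "\<phi> \<in> borel_measurable B"
  shows "qbar M (\<lambda>\<omega>. \<phi> (X \<omega>)) p = qbar M (\<lambda>\<omega>. \<phi> (Y \<omega>)) p"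
proof -
  have "distr M borel (\<lambda>\<omega>. \<phi> (X \<omega>)) = distr M borel (\<lambda>\<omega>. \<phi> (Y \<omega>))"
    using distr_distr[OF assms(4,1)] distr_distr[OF assms(4,2)] assms(3) by (simp add: comp_def)
  then show ?thesis unfolding qbar_def by simp
qed

lemma mdep_channel_qbar_eq:
  assumes "mdep_channel M N m Z" "\<phi> \<in> borel_measurable borel" "n \<in> {1..N}" "k \<in> {1..N}"
  shows "qbar M (\<lambda>\<omega>. \<phi> (Z n n k \<omega>)) p = qbar M (\<lambda>\<omega>. \<phi> (Z n n 1 \<omega>)) p"
proof -
  have "1 \<in> {1..N}" using assms(4) by auto
  then have "Z n n k \<in> borel_measurable M" "Z n n 1 \<in> borel_measurable M"
    and "distr M borel (Z n n k) = distr M borel (Z n n 1)"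
    using assms(1,3,4) unfolding mdep_channel_def by blast+
  then show ?thesis using assms(2) by (rule qbar_distr_cong)
qed

context prob_space
begin

lemma prob_ge_1_minus_union_bound:
  assumes "finite I" and E: "\<And>i. i \<in> I \<Longrightarrow> E i \<in> events" "\<And>i. i \<in> I \<Longrightarrow> prob (E i) \<le> b"
    and "G \<in> events" "space M - (\<Union>i\<in>I. E i) \<subseteq> G"
  shows "1 - real (card I) * b \<le> prob G"
proof -
  have "prob (\<Union>i\<in>I. E i) \<le> (\<Sum>i\<in>I. prob (E i))"
    using assms(1) E(1) by (intro finite_measure_subadditive_finite) auto
  also have "\<dots> \<le> real (card I) * b"
    using E(2) by (intro sum_bounded_above) auto
  finally have "1 - real (card I) * b \<le> prob (space M - (\<Union>i\<in>I. E i))"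
    using assms(1) E(1) by (subst prob_compl) auto
  also have "\<dots> \<le> prob G"
    using assms(1,4,5) E(1) by (intro finite_measure_mono) auto
  finally show ?thesis .
qed

lemma prob_gt_qbar_le:
  assumes X: "X \<in> borel_measurable M" and p: "0 < p" "p < 1"
  shows "prob {\<omega> \<in> space M. qbar M X p < X \<omega>} \<le> p"
proof -
  define D where "D = distr M borel X"
  interpret D: real_distribution D unfolding D_def using X by (rule real_distribution_distr)
  have cdf_D: "cdf D x = prob {\<omega> \<in> space M. X \<omega> \<le> x}" for x
    unfolding cdf_def D_def using X
    by (subst measure_distr) (auto intro!: arg_cong[where f=prob] simp: vimage_def)
  define Q where "Q = {x. 1 - p \<le> cdf D x}"
  have "\<forall>\<^sub>F x in at_top. 1 - p < cdf D x"
    using D.cdf_lim_at_top_prob p by (intro order_tendstoD) auto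
  then obtain x0 where "1 - p < cdf D x0" by (metis eventually_at_top_linorder order.refl)
  then have "Q \<noteq> {}" unfolding Q_def by (auto intro!: exI[of _ x0])
  have "\<forall>\<^sub>F x in at_bot. cdf D x < 1 - p"
    using D.cdf_lim_at_bot p by (intro order_tendstoD) auto
  then obtain L where "\<And>x. x \<le> L \<Longrightarrow> cdf D x < 1 - p" by (auto simp: eventually_at_bot_linorder)
  then have "bdd_below Q" unfolding Q_def bdd_below_def by (metis linorder_not_le mem_Collect_eq nle_le)
  define q where "q = Inf Q"
  have "\<forall>\<^sub>F x in at_right q. 1 - p \<le> cdf D x"
  proof (rule eventually_mono[OF eventually_at_right_less])
    fix x assume "q < x"
    then obtain y where "y \<in> Q" "y < x" using cInf_lessD[OF \<open>Q \<noteq> {}\<close>] unfolding q_def by blast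
    then show "1 - p \<le> cdf D x" unfolding Q_def using D.cdf_nondecreasing[of y x] by auto
  qed
  moreover have "(cdf D \<longlongrightarrow> cdf D q) (at_right q)"
    using D.cdf_is_right_cont[of q] by (simp add: continuous_within)
  ultimately have "1 - p \<le> cdf D q"
    by (intro tendsto_lowerbound) auto
  moreover have "{\<omega> \<in> space M. q < X \<omega>} = space M - {\<omega> \<in> space M. X \<omega> \<le> q}" by auto
  then have "prob {\<omega> \<in> space M. q < X \<omega>} = 1 - cdf D q"
    unfolding cdf_D using X by (simp add: prob_compl)
  moreover have "qbar M X p = q" unfolding q_def qbar_def Q_def D_def ..
  ultimately show ?thesis by simp
qed

lemma integrable_exp_card:
  assumes "finite C" and Q: "\<And>j. j \<in> C \<Longrightarrow> Measurable.pred M (Q j)"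
  shows "integrable M (\<lambda>\<omega>. exp (real (card {k \<in> C. Q k \<omega>})))"
proof (rule integrable_const_bound[where B="exp (card C)"])
  show "AE \<omega> in M. norm (exp (real (card {k \<in> C. Q k \<omega>}))) \<le> exp (card C)"
    using \<open>finite C\<close> by (intro AE_I2) (simp add: card_mono)
  show "(\<lambda>\<omega>. exp (real (card {k \<in> C. Q k \<omega>}))) \<in> borel_measurable M"
    using measurable_compose[OF borel_measurable_card_Collect[OF assms] borel_measurable_exp] .
qed

lemma integral_exp_indicator_le:
  fixes p :: real
  assumes "X \<in> measurable M B" "S \<in> sets B" "prob {\<omega> \<in> space M. X \<omega> \<in> S} \<le> p"
  shows "(\<integral>\<omega>. exp (indicator S (X \<omega>) :: real) \<partial>M) \<le> 1 + (exp 1 - 1) * p"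
proof -
  define A where "A = {\<omega> \<in> space M. X \<omega> \<in> S}"
  have A: "A \<in> events" unfolding A_def using assms(1,2) by measurable
  have "(\<integral>\<omega>. exp (indicator S (X \<omega>) :: real) \<partial>M) = (\<integral>\<omega>. 1 + (exp 1 - 1) * indicator A \<omega> \<partial>M)"
    by (intro Bochner_Integration.integral_cong) (auto simp: indicator_def A_def)
  also have "\<dots> = 1 + (exp 1 - 1) * prob A"
    using A by (subst Bochner_Integration.integral_add)
      (auto simp: prob_space less_top[symmetric] intro!: integrable_real_indicator)
  also have "\<dots> \<le> 1 + (exp 1 - 1) * p"
    using assms(3) unfolding A_def by (intro add_left_mono mult_left_mono) auto
  finally show ?thesis .
qed

lemma indep_integral_exp_card_mult:
  fixes Z :: "nat \<Rightarrow> 'a \<Rightarrow> 'b"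
  assumes Z: "\<And>k. k \<in> {1..N} \<Longrightarrow> Z k \<in> measurable M B"
    and mdep: "m_dependent M B N m Z"
    and S: "S \<in> sets B"
    and A: "finite A" "A \<subseteq> {1..N}" "A \<noteq> {}" and b: "b \<in> {1..N}"
    and before_b: "\<And>a. a \<in> A \<Longrightarrow> a + m < b"
  shows "(\<integral>\<omega>. exp (real (card {k \<in> A. Z k \<omega> \<in> S})) * exp (real (card {k \<in> {b}. Z k \<omega> \<in> S})) \<partial>M) =
    (\<integral>\<omega>. exp (real (card {k \<in> A. Z k \<omega> \<in> S})) \<partial>M) * (\<integral>\<omega>. exp (real (card {k \<in> {b}. Z k \<omega> \<in> S})) \<partial>M)"
proof -
  let ?c = "\<lambda>C v. exp (real (card {k \<in> C. v k \<in> S}))"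
  have restrict: "?c C \<circ> (\<lambda>\<omega>. \<lambda>k\<in>I. Z k \<omega>) = (\<lambda>\<omega>. ?c C (\<lambda>k. Z k \<omega>))" if "C \<subseteq> I" for C I
  proof
    fix \<omega>
    have "{k \<in> C. (\<lambda>k\<in>I. Z k \<omega>) k \<in> S} = {k \<in> C. Z k \<omega> \<in> S}" using that by auto
    then show "(?c C \<circ> (\<lambda>\<omega>. \<lambda>k\<in>I. Z k \<omega>)) \<omega> = ?c C (\<lambda>k. Z k \<omega>)" by simp
  qed
  have pred_Z: "Measurable.pred M (\<lambda>\<omega>. Z k \<omega> \<in> S)" if "k \<in> {1..N}" for k
    using pred_sets2[OF S Z[OF that]] .
  \<comment> \<open>Cutting at \<open>s\<close> leaves the gap \<open>{s+1..s+m}\<close> between the past \<open>A\<close> and the future \<open>b\<close>.\<close>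
  define s where "s = b - (m + 1)"
  have "m + 1 \<le> b" using A(3) before_b by fastforce
  then have past: "A \<subseteq> {1..min s N}" and future: "{b} \<subseteq> {s+m+1..N}"
    using A(2) before_b b unfolding s_def by force+
  have "indep_var borel (?c A \<circ> (\<lambda>\<omega>. \<lambda>k\<in>{1..min s N}. Z k \<omega>))
                  borel (?c {b} \<circ> (\<lambda>\<omega>. \<lambda>k\<in>{s+m+1..N}. Z k \<omega>))"
    using past future A(1) S
    by (intro indep_var_compose[OF mdep[unfolded m_dependent_def, rule_format]]
        borel_measurable_exp_card_component) auto
  then have "indep_var borel (\<lambda>\<omega>. ?c A (\<lambda>k. Z k \<omega>)) borel (\<lambda>\<omega>. ?c {b} (\<lambda>k. Z k \<omega>))"
    unfolding restrict[OF past] restrict[OF future] .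
  moreover have integrable: "integrable M (\<lambda>\<omega>. ?c C (\<lambda>k. Z k \<omega>))" if "C \<subseteq> {1..N}" for C
    using that pred_Z finite_subset[OF that] by (intro integrable_exp_card) auto
  ultimately show ?thesis
    using A(2) b by (intro indep_var_lebesgue_integral integrable) auto
qed

lemma mdep_integral_exp_card_le:
  fixes Z :: "nat \<Rightarrow> 'a \<Rightarrow> 'b" and p :: real
  assumes Z: "\<And>k. k \<in> {1..N} \<Longrightarrow> Z k \<in> measurable M B"
    and mdep: "m_dependent M B N m Z"
    and S: "S \<in> sets B"
    and tail: "\<And>k. k \<in> {1..N} \<Longrightarrow> prob {\<omega> \<in> space M. Z k \<omega> \<in> S} \<le> p"
    and C: "C \<subseteq> {1..N}" and gap: "\<And>a b. a \<in> C \<Longrightarrow> b \<in> C \<Longrightarrow> a < b \<Longrightarrow> a + m < b"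
  shows "(\<integral>\<omega>. exp (real (card {k \<in> C. Z k \<omega> \<in> S})) \<partial>M) \<le> (1 + (exp 1 - 1) * p) ^ card C"
proof -
  have "finite C" using C finite_subset by blast
  then show ?thesis using C gap
  proof (induction C rule: finite_linorder_max_induct)
    case empty then show ?case by simp
  next
    case (insert b A)
    have b: "b \<in> {1..N}" and A: "A \<subseteq> {1..N}" "b \<notin> A" using insert by auto
    let ?cA = "\<lambda>\<omega>. exp (real (card {k \<in> A. Z k \<omega> \<in> S}))"
      and ?cb = "\<lambda>\<omega>. exp (real (card {k \<in> {b}. Z k \<omega> \<in> S}))"
    have split: "exp (real (card {k \<in> insert b A. Z k \<omega> \<in> S})) = ?cA \<omega> * ?cb \<omega>" for \<omega>
    proof -
      have "{k \<in> insert b A. Z k \<omega> \<in> S} = {k \<in> A. Z k \<omega> \<in> S} \<union> {k \<in> {b}. Z k \<omega> \<in> S}"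
        by auto
      also have "card \<dots> = card {k \<in> A. Z k \<omega> \<in> S} + card {k \<in> {b}. Z k \<omega> \<in> S}"
        using A(2) \<open>finite A\<close> by (intro card_Un_disjoint) auto
      finally show ?thesis by (simp add: exp_add)
    qed
    have product: "(\<integral>\<omega>. ?cA \<omega> * ?cb \<omega> \<partial>M) = integral\<^sup>L M ?cA * integral\<^sup>L M ?cb"
    proof (cases "A = {}")
      case True then show ?thesis by (simp add: prob_space)
    next
      case False
      then show ?thesis using insert A b
        by (intro indep_integral_exp_card_mult[OF Z mdep S]) auto
    qed
    have "(\<integral>\<omega>. ?cb \<omega> \<partial>M) = (\<integral>\<omega>. exp (indicator S (Z b \<omega>)) \<partial>M)"
      by (intro Bochner_Integration.integral_cong refl) (simp only: card_filter_singleton indicator_def of_nat_of_bool)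
    also have "\<dots> \<le> 1 + (exp 1 - 1) * p"
      using Z[OF b] S tail[OF b] by (rule integral_exp_indicator_le)
    finally have single: "integral\<^sup>L M ?cb \<le> 1 + (exp 1 - 1) * p" .
    have "0 \<le> p" using tail[OF b] measure_nonneg order_trans by blast
    then have base_nonneg: "0 \<le> 1 + (exp 1 - 1) * p"
      by (intro add_nonneg_nonneg mult_nonneg_nonneg) auto
    have "(\<integral>\<omega>. exp (real (card {k \<in> insert b A. Z k \<omega> \<in> S})) \<partial>M) = integral\<^sup>L M ?cA * integral\<^sup>L M ?cb"
      by (simp only: split product)
    also have "\<dots> \<le> (1 + (exp 1 - 1) * p) ^ card A * (1 + (exp 1 - 1) * p)"
      using insert single base_nonneg by (intro mult_mono) (auto intro!: integral_nonneg_AE)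
    also have "\<dots> = (1 + (exp 1 - 1) * p) ^ card (insert b A)"
      using A(2) \<open>finite A\<close> by simp
    finally show ?case .
  qed
qed

lemma mdep_card_tail_le:
  fixes Z :: "nat \<Rightarrow> 'a \<Rightarrow> 'b" and p :: real
  assumes Z: "\<And>k. k \<in> {1..N} \<Longrightarrow> Z k \<in> measurable M B"
    and mdep: "m_dependent M B N m Z"
    and S: "S \<in> sets B"
    and tail: "\<And>k. k \<in> {1..N} \<Longrightarrow> prob {\<omega> \<in> space M. Z k \<omega> \<in> S} \<le> p" and "0 \<le> p"
    and C: "C \<subseteq> {1..N}" and gap: "\<And>a b. a \<in> C \<Longrightarrow> b \<in> C \<Longrightarrow> a < b \<Longrightarrow> a + m < b"
  shows "prob {\<omega> \<in> space M. t \<le> real (card {k \<in> C. Z k \<omega> \<in> S})}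
           \<le> exp ((exp 1 - 1) * p * card C - t)"
proof -
  let ?count = "\<lambda>\<omega>. real (card {k \<in> C. Z k \<omega> \<in> S})"
  have pred_Z: "Measurable.pred M (\<lambda>\<omega>. Z k \<omega> \<in> S)" if "k \<in> C" for k
    using pred_sets2[OF S Z] that C by auto
  have "finite C" using C finite_subset by blast
  have "{\<omega> \<in> space M. t \<le> ?count \<omega>} = {\<omega> \<in> space M. exp t \<le> exp (?count \<omega>)}" by simp
  also have "prob \<dots> \<le> (\<integral>\<omega>. exp (?count \<omega>) \<partial>M) / exp t"
    using \<open>finite C\<close> pred_Z by (intro integral_Markov_inequality_measure integrable_exp_card) auto
  also have "\<dots> \<le> (1 + (exp 1 - 1) * p) ^ card C / exp t"
    by (intro divide_right_mono mdep_integral_exp_card_le[OF Z mdep S tail C gap]) auto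
  also have "\<dots> \<le> exp ((exp 1 - 1) * p) ^ card C / exp t"
    using \<open>0 \<le> p\<close> exp_ge_add_one_self[of "(exp 1 - 1) * p"]
    by (intro divide_right_mono power_mono) auto
  also have "\<dots> = exp ((exp 1 - 1) * p * card C - t)"
    by (simp add: exp_diff exp_of_nat_mult[symmetric] mult.commute)
  finally show ?thesis .
qed

lemma residue_class_card_tail_le:
  fixes Z :: "nat \<Rightarrow> 'a \<Rightarrow> 'b" and \<mu> :: real
  assumes Z: "\<And>k. k \<in> {1..N} \<Longrightarrow> Z k \<in> measurable M B"
    and mdep: "m_dependent M B N m Z"
    and S: "S \<in> sets B" and "0 \<le> \<mu>"
    and tail: "\<And>k. k \<in> {1..N} \<Longrightarrow>
       prob {\<omega> \<in> space M. Z k \<omega> \<in> S} \<le> \<mu> / (exp 1 * real (N + m + 1))"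
  shows "prob {\<omega> \<in> space M. \<mu> / real (m + 1) \<le> real (card {k \<in> residue_class (m + 1) N c. Z k \<omega> \<in> S})}
           \<le> exp (- (\<mu> / (exp 1 * real (m + 1))))"
proof -
  define p where "p = \<mu> / (exp 1 * real (N + m + 1))"
  let ?C = "residue_class (m + 1) N c"
  have "card ?C * (m + 1) \<le> N + (m + 1)" by (rule card_residue_class_le) simp
  then have "card ?C * real (m + 1) \<le> real (N + m + 1)"
    by (metis add.assoc of_nat_le_iff of_nat_mult)
  then have "real (card ?C) \<le> real (N + m + 1) / real (m + 1)"
    by (simp add: le_divide_eq)
  then have "p * card ?C \<le> p * (real (N + m + 1) / real (m + 1))"
    using \<open>0 \<le> \<mu>\<close> unfolding p_def by (intro mult_left_mono) auto
  also have "\<dots> = \<mu> / (exp 1 * real (m + 1))"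
    unfolding p_def by (simp add: field_simps del: of_nat_Suc of_nat_add)
  finally have "(exp 1 - 1) * (p * card ?C) \<le> (exp 1 - 1) * (\<mu> / (exp 1 * real (m + 1)))"
    by (intro mult_left_mono) auto
  also have "\<dots> = \<mu> / real (m + 1) - \<mu> / (exp 1 * real (m + 1))"
    by (simp add: field_simps del: of_nat_Suc of_nat_add)
  finally have exponent: "(exp 1 - 1) * p * card ?C - \<mu> / real (m + 1) \<le> - (\<mu> / (exp 1 * real (m + 1)))"
    by (simp add: mult.assoc)
  have "prob {\<omega> \<in> space M. \<mu> / real (m + 1) \<le> real (card {k \<in> ?C. Z k \<omega> \<in> S})}
           \<le> exp ((exp 1 - 1) * p * card ?C - \<mu> / real (m + 1))"
    using \<open>0 \<le> \<mu>\<close> residue_class_subset residue_class_gap[of _ "m + 1" N c] tail unfolding p_def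
    by (intro mdep_card_tail_le[OF Z mdep S]) fastforce+
  also have "\<dots> \<le> exp (- (\<mu> / (exp 1 * real (m + 1))))"
    using exponent by simp
  finally show ?thesis .
qed

end

lemma prob_G_union_subset_top_edges_ge:
  fixes Z :: "nat \<Rightarrow> nat \<Rightarrow> nat \<Rightarrow> 'a \<Rightarrow> complex"
  assumes "prob_space M" and chan: "mdep_channel M N m Z" and \<phi>: "\<phi> \<in> borel_measurable borel"
    and Mn: "1 \<le> Mn" "Mn \<le> N"
  shows "1 - real N * real (m + 1) * exp (- (real Mn / (exp 1 * real (m + 1))))
    \<le> measure M {\<omega> \<in> space M. G_union M (\<lambda>n k \<omega>. \<phi> (Z n n k \<omega>)) m N Mn \<omega> \<subseteq> top_edges \<phi> Z N Mn \<omega>}"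
    (is "_ \<le> measure M ?good")
proof -
  interpret prob_space M by fact
  define p where "p = real Mn / (exp 1 * real (N + m + 1))"
  have "0 < p" unfolding p_def using Mn by simp
  have "p < 1"
  proof -
    have "real Mn < real (N + m + 1)" using Mn by simp
    also have "\<dots> < exp 1 * real (N + m + 1)" by simp
    finally show ?thesis unfolding p_def by simp
  qed
  have Z: "Z n n k \<in> borel_measurable M" if "n \<in> {1..N}" "k \<in> {1..N}" for n k
    using chan that unfolding mdep_channel_def by blast
  have mdep: "m_dependent M borel N m (Z n n)" if "n \<in> {1..N}" for n
    using chan that unfolding mdep_channel_def m_dependent_def by blast
  define q where "q n = qbar M (\<lambda>\<omega>. \<phi> (Z n n 1 \<omega>)) p" for n
  have q: "qbar M (\<lambda>\<omega>. \<phi> (Z n n k \<omega>)) p = q n" if "n \<in> {1..N}" "k \<in> {1..N}" for n k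
    unfolding q_def using chan \<phi> that by (rule mdep_channel_qbar_eq)
  define S where "S n = {z. q n < \<phi> z}" for n
  have S: "S n \<in> sets borel" for n unfolding S_def using \<phi> by measurable
  define E where "E n c = {\<omega> \<in> space M. real Mn / real (m + 1)
      \<le> real (card {k \<in> residue_class (m + 1) N c. Z n n k \<omega> \<in> S n})}" for n c
  have prob_E: "prob (E n c) \<le> exp (- (real Mn / (exp 1 * real (m + 1))))" if "n \<in> {1..N}" for n c
  proof -
    have "prob {\<omega> \<in> space M. Z n n k \<omega> \<in> S n} \<le> p" if "k \<in> {1..N}" for k
      using prob_gt_qbar_le[OF measurable_compose[OF Z \<phi>] \<open>0 < p\<close> \<open>p < 1\<close>] \<open>n \<in> {1..N}\<close> that
      by (simp add: q S_def)
    then show ?thesis unfolding E_def p_def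
      by (intro residue_class_card_tail_le[OF Z mdep S]) (use that in auto)
  qed
  have E_sets: "E n c \<in> events" if "n \<in> {1..N}" for n c
  proof -
    have [measurable]: "(\<lambda>\<omega>. real (card {k \<in> residue_class (m + 1) N c. Z n n k \<omega> \<in> S n}))
        \<in> borel_measurable M"
      using that by (intro borel_measurable_card_Collect pred_sets2[OF S] Z) (auto simp: residue_class_def)
    show ?thesis unfolding E_def by measurable
  qed
  have "1 - real (card ({1..N} \<times> {..<m + 1})) * exp (- (real Mn / (exp 1 * real (m + 1))))
    \<le> prob ?good"
  proof (rule prob_ge_1_minus_union_bound[where E="case_prod E"])
    show "?good \<in> events"
      using pred_G_union_subset_top_edges[where Z=Z, OF Z \<phi>] by (simp add: pred_def)
    show "space M - (\<Union>i\<in>{1..N} \<times> {..<m + 1}. case_prod E i) \<subseteq> ?good"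
    proof
      fix \<omega> assume \<omega>: "\<omega> \<in> space M - (\<Union>i\<in>{1..N} \<times> {..<m + 1}. case_prod E i)"
      then have "G_union M (\<lambda>n k \<omega>. \<phi> (Z n n k \<omega>)) m N Mn \<omega> \<subseteq> top_edges \<phi> Z N Mn \<omega>"
        using q unfolding E_def S_def p_def
        by (intro G_union_subset_top_edges_if_sparse[where q=q]) (auto simp: not_le)
      with \<omega> show "\<omega> \<in> ?good" by simp
    qed
  qed (use prob_E E_sets in auto)
  then show ?thesis by (simp add: algebra_simps)
qed

lemma tail_bound_tendsto_zero:
  fixes x :: "nat \<Rightarrow> real"
  assumes "0 < a" "0 < d" "0 < \<epsilon>" and x: "\<And>N. d * (a + \<epsilon>) * ln (real N) \<le> x N"
  shows "(\<lambda>N. real N * d * exp (- (x N / (a * d)))) \<longlonglongrightarrow> 0"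
proof (rule tendsto_sandwich)
  show "\<forall>\<^sub>F N in sequentially. 0 \<le> real N * d * exp (- (x N / (a * d)))"
    using \<open>0 < d\<close> by simp
  show "\<forall>\<^sub>F N in sequentially. real N * d * exp (- (x N / (a * d))) \<le> d * real N powr (- (\<epsilon> / a))"
  proof (rule eventually_mono[OF eventually_ge_at_top[of 1]])
    fix N :: nat assume "1 \<le> N"
    have exponent: "1 + - ((a + \<epsilon>) / a) = - (\<epsilon> / a)"
      using \<open>0 < a\<close> by (simp add: field_simps)
    have "(a + \<epsilon>) / a * ln (real N) = d * (a + \<epsilon>) * ln (real N) / (a * d)"
      using assms(1,2) by (simp add: field_simps)
    also have "\<dots> \<le> x N / (a * d)"
      using x[of N] assms(1,2) by (intro divide_right_mono) auto
    finally have "(a + \<epsilon>) / a * ln (real N) \<le> x N / (a * d)" .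
    then have "exp (- (x N / (a * d))) \<le> real N powr (- ((a + \<epsilon>) / a))"
      using \<open>1 \<le> N\<close> by (simp add: powr_def)
    then have "real N * d * exp (- (x N / (a * d))) \<le> real N * d * real N powr (- ((a + \<epsilon>) / a))"
      using \<open>0 < d\<close> by (intro mult_left_mono) auto
    also have "\<dots> = d * (real N powr 1 * real N powr (- ((a + \<epsilon>) / a)))"
      using \<open>1 \<le> N\<close> by simp
    also have "\<dots> = d * real N powr (- (\<epsilon> / a))"
      by (simp only: powr_add[symmetric] exponent)
    finally show "real N * d * exp (- (x N / (a * d))) \<le> d * real N powr (- (\<epsilon> / a))" .
  qed
  show "(\<lambda>N. d * real N powr (- (\<epsilon> / a))) \<longlonglongrightarrow> 0"
    using assms(1,3) by (intro tendsto_mult_right_zero tendsto_neg_powr filterlim_real_sequentially) auto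
qed simp

lemma eventually_one_le_and_le:
  fixes M :: "nat \<Rightarrow> nat"
  assumes "(\<lambda>N. real (M N) / real N) \<longlonglongrightarrow> 0" "0 < c" "\<And>N. c * ln (real N) \<le> real (M N)"
  shows "\<forall>\<^sub>F N in sequentially. 1 \<le> M N \<and> M N \<le> N"
  using order_tendstoD(2)[OF assms(1) zero_less_one] eventually_ge_at_top[of 2]
proof eventually_elim
  case (elim N)
  then have "0 < c * ln (real N)" using \<open>0 < c\<close> by simp
  then have "1 \<le> M N" using assms(3)[of N] by linarith
  moreover have "M N < N" using elim by (simp add: divide_less_eq)
  ultimately show ?case by simp
qed

lemma prob_G_union_subset_top_edges_tendsto_1:
  fixes P :: "nat \<Rightarrow> 'a measure" and h :: "nat \<Rightarrow> nat \<Rightarrow> nat \<Rightarrow> nat \<Rightarrow> 'a \<Rightarrow> complex"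
    and M :: "nat \<Rightarrow> nat"
  assumes prob: "\<And>N. prob_space (P N)" and chan: "\<And>N. mdep_channel (P N) N m (h N)"
    and \<phi>: "\<phi> \<in> borel_measurable borel" and "0 < \<epsilon>"
    and Mlow: "\<And>N. real (m + 1) * (exp 1 + \<epsilon>) * ln (real N) \<le> real (M N)"
    and M_range: "\<forall>\<^sub>F N in sequentially. 1 \<le> M N \<and> M N \<le> N"
  shows "(\<lambda>N. measure (P N) {\<omega> \<in> space (P N).
      G_union (P N) (\<lambda>n k \<omega>. \<phi> (h N n n k \<omega>)) m N (M N) \<omega> \<subseteq> top_edges \<phi> (h N) N (M N) \<omega>})
      \<longlonglongrightarrow> 1"
proof -
  define b where "b N = real N * real (m + 1) * exp (- (real (M N) / (exp 1 * real (m + 1))))" for N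
  have "b \<longlonglongrightarrow> 0"
    unfolding b_def using Mlow \<open>0 < \<epsilon>\<close> by (intro tail_bound_tendsto_zero) auto
  then have lower_lim: "(\<lambda>N. 1 - b N) \<longlonglongrightarrow> 1"
    using tendsto_diff[OF tendsto_const, of b 0 sequentially 1] by simp
  show ?thesis
  proof (rule tendsto_sandwich[OF _ _ lower_lim tendsto_const])
    show "\<forall>\<^sub>F N in sequentially. 1 - b N \<le> measure (P N) {\<omega> \<in> space (P N).
        G_union (P N) (\<lambda>n k \<omega>. \<phi> (h N n n k \<omega>)) m N (M N) \<omega> \<subseteq> top_edges \<phi> (h N) N (M N) \<omega>}"
      using M_range unfolding b_def
      by eventually_elim (rule prob_G_union_subset_top_edges_ge[OF prob chan \<phi>], auto)
  qed (simp add: prob_space.prob_le_1[OF prob])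
qed

theorem mainTheorem16:
  fixes P :: "nat \<Rightarrow> 'a measure"
    and h :: "nat \<Rightarrow> nat \<Rightarrow> nat \<Rightarrow> nat \<Rightarrow> 'a \<Rightarrow> complex"
    and M :: "nat \<Rightarrow> nat" and m :: nat and \<epsilon> :: real
  assumes prob: "\<And>N. prob_space (P N)"
    and chan: "\<And>N. mdep_channel (P N) N m (h N)"
    and cont: "\<And>N n k x. n \<in> {1..N} \<Longrightarrow> k \<in> {1..N} \<Longrightarrow>
                 measure (P N) {\<omega> \<in> space (P N). cmod (h N n n k \<omega>) = x} = 0"
    and eps: "\<epsilon> > 0"
    and Mlow: "\<And>N. real (M N) \<ge> real (m + 1) * (exp 1 + \<epsilon>) * ln (real N)"
    and Mlim: "(\<lambda>N. real (M N) / real N) \<longlonglongrightarrow> 0"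
  shows "((\<lambda>N. measure (P N) {\<omega> \<in> space (P N).
            G_union (P N) (\<lambda>n k \<omega>. cmod (h N n n k \<omega>)) m N (M N) \<omega>
              \<subseteq> B_best (h N) N (M N) \<omega>}) \<longlonglongrightarrow> 1) \<and>
         ((\<lambda>N. measure (P N) {\<omega> \<in> space (P N).
            G_union (P N) (\<lambda>n k \<omega>. - cmod (h N n n k \<omega>)) m N (M N) \<omega>
              \<subseteq> B_worst (h N) N (M N) \<omega>}) \<longlonglongrightarrow> 1)"
proof -
  have "0 < real (m + 1) * (exp 1 + \<epsilon>)"
    using eps by (intro mult_pos_pos add_pos_pos) auto
  then have M_range: "\<forall>\<^sub>F N in sequentially. 1 \<le> M N \<and> M N \<le> N"
    using Mlim Mlow by (intro eventually_one_le_and_le) auto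
  note whp = prob_G_union_subset_top_edges_tendsto_1[OF prob chan _ eps Mlow M_range]
  show ?thesis
  proof
    show "(\<lambda>N. measure (P N) {\<omega> \<in> space (P N). G_union (P N) (\<lambda>n k \<omega>. cmod (h N n n k \<omega>)) m N (M N) \<omega>
              \<subseteq> B_best (h N) N (M N) \<omega>}) \<longlonglongrightarrow> 1"
      by (rule Lim_transform_eventually[OF whp[OF borel_measurable_norm] eventually_mono[OF M_range]])
        (simp add: B_best_eq_top_edges)
    show "(\<lambda>N. measure (P N) {\<omega> \<in> space (P N). G_union (P N) (\<lambda>n k \<omega>. - cmod (h N n n k \<omega>)) m N (M N) \<omega>
              \<subseteq> B_worst (h N) N (M N) \<omega>}) \<longlonglongrightarrow> 1"
      by (rule Lim_transform_eventually[OF whp eventually_mono[OF M_range]])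
        (simp_all add: B_worst_eq_top_edges)
  qed
qed

end
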